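(* Let $\alpha=1/m$ with $m\in\mathbb{N}$, $m\ge 2$, let $h>0$ and $c>0$, and let $$L(s)=\exp\bigl\{-c\bigl((s+h)^{\alpha}-h^{\alpha}\bigr)\bigr\},\qquad s\ge0,$$ be the Laplace transform of a tempered positive stable distribution. For $n\in\mathbb{N}$ define $$g_n(s)=\exp\Bigl(h-\Bigl(\tfrac1n (s+h)^{\alpha}+\tfrac{n-1}{n}h^{\alpha}\Bigr)^{1/\alpha}\Bigr),\qquad s\ge0.$$ Then each $g_n$ is the Laplace transform of a probability distribution on $[0,\infty)$, and $L(s)=[L(-\log g_n(s))]^n$ for all $s\ge0$ and $n\in\mathbb{N}$; that is, the distribution with Laplace transform $L$ is casual stable. In particular (case $\alpha=1/2$) the inverse Gaussian distribution is casual stable.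
   Context: A nonnegative random variable with Laplace transform $L$ is called casual stable if for every $n\in\mathbb{N}$ there is the Laplace transform $g_n$ of a probability distribution on $[0,\infty)$ such that $L(s)=[L(-\log g_n(s))]^n$ for all $s\ge0$. (In the paper the constant is $c=\lambda^{\alpha}(1+\tan\frac{\pi\alpha}{2})$ with $\lambda>0$.) *)

theory Defs
  imports "HOL-Probability.Probability"
begin

definition is_laplace_transform_prob :: "(real \<Rightarrow> real) \<Rightarrow> bool" where
  "is_laplace_transform_prob g \<longleftrightarrow>
     (\<exists>M :: real measure. prob_space M \<and> sets M = sets borel \<and>
        (AE x in M. 0 \<le> x) \<and>
        (\<forall>s\<ge>0. g s = (\<integral>x. exp (- s * x) \<partial>M)))"

definition casual_stable :: "(real \<Rightarrow> real) \<Rightarrow> bool" where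
  "casual_stable L \<longleftrightarrow>
     (\<forall>n::nat. n \<ge> 1 \<longrightarrow> (\<exists>g. is_laplace_transform_prob g \<and>
        (\<forall>s\<ge>0. L s = (L (- ln (g s))) ^ n)))"

definition tps_L :: "real \<Rightarrow> real \<Rightarrow> real \<Rightarrow> real \<Rightarrow> real" where
  "tps_L \<alpha> c h s = exp (- c * ((s + h) powr \<alpha> - h powr \<alpha>))"

definition casual_g :: "real \<Rightarrow> real \<Rightarrow> nat \<Rightarrow> real \<Rightarrow> real" where
  "casual_g \<alpha> h n s =
     exp (h - ((1 / real n) * (s + h) powr \<alpha> + ((real n - 1) / real n) * h powr \<alpha>) powr (1 / \<alpha>))"

end

theory Submission
  imports Defs
begin

text \<open>
  The functional equation L(s) = L(-ln g_n(s))^n is a direct computation, valid for every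
  \<alpha> > 0. The substance is that g_n is the Laplace transform of a probability law on [0,\<infinity>).
  Writing u = (s+h)^(1/m) and h0 = h^(1/m), one has ln g_n(s) = h0^m - (u/n + (n-1) h0/n)^m,
  and the binomial theorem turns g_n into a finite product of factors
  exp(-A_k ((s+h)^(k/m) - h^(k/m))) with A_k \<ge> 0: a constant (k = 0), a point mass (k = m),
  and tempered stable Laplace transforms of index k/m \<in> (0,1) otherwise.
\<close>

lemma lt_cong:
  assumes "is_laplace_transform_prob f" and "\<And>s. s \<ge> 0 \<Longrightarrow> f s = g s"
  shows "is_laplace_transform_prob g"
  using assms unfolding is_laplace_transform_prob_def by metis

lemma lt_dirac:
  assumes "t \<ge> 0"
  shows "is_laplace_transform_prob (\<lambda>s. exp (- s * t))"
  unfolding is_laplace_transform_prob_def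
  using assms by (intro exI[of _ "return borel t"]) (auto simp: prob_space_return AE_return integral_return)

lemma lt_one: "is_laplace_transform_prob (\<lambda>s. 1)"
  using lt_dirac[of 0] by simp

lemma convolution_nonneg_prob:
  fixes M N :: "real measure"
  assumes M: "prob_space M" "sets M = sets borel" "AE x in M. 0 \<le> x"
    and N: "prob_space N" "sets N = sets borel" "AE x in N. 0 \<le> x"
  shows "prob_space (M \<star> N)" and "AE x in M \<star> N. 0 \<le> x"
    and "\<And>f. f \<in> borel_measurable borel \<Longrightarrow>
           (\<integral>\<^sup>+x. f x \<partial>(M \<star> N)) = (\<integral>\<^sup>+x. \<integral>\<^sup>+y. f (x + y) \<partial>N \<partial>M)"
proof -
  interpret M: prob_space M by fact
  interpret N: prob_space N by fact
  note [measurable_cong] = M(2) N(2)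
  show conv: "(\<integral>\<^sup>+x. f x \<partial>(M \<star> N)) = (\<integral>\<^sup>+x. \<integral>\<^sup>+y. f (x + y) \<partial>N \<partial>M)"
    if [measurable]: "f \<in> borel_measurable borel" for f
    by (rule nn_integral_convolution) (unfold_locales, simp_all add: M(2) N(2))
  have "emeasure (M \<star> N) (space (M \<star> N)) = (\<integral>\<^sup>+x. \<integral>\<^sup>+y. 1 \<partial>N \<partial>M)"
    using conv[of "\<lambda>_. 1"] by simp
  also have "\<dots> = 1" by (simp add: M.emeasure_space_1 N.emeasure_space_1)
  finally show "prob_space (M \<star> N)" by (rule prob_spaceI)
  have "emeasure (M \<star> N) {..<0} = (\<integral>\<^sup>+x. \<integral>\<^sup>+y. indicator {..<0::real} (x + y) \<partial>N \<partial>M)"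
    using conv[of "indicator {..<0}"] by simp
  also have "\<dots> = (\<integral>\<^sup>+x. 0 \<partial>M)"
  proof (rule nn_integral_cong_AE)
    show "AE x in M. (\<integral>\<^sup>+y. indicator {..<0::real} (x + y) \<partial>N) = 0"
      using M(3)
    proof eventually_elim
      case (elim x)
      have "(\<integral>\<^sup>+y. indicator {..<0::real} (x + y) \<partial>N) = (\<integral>\<^sup>+y. 0 \<partial>N)"
        by (rule nn_integral_cong_AE) (use N(3) elim in \<open>auto simp: indicator_def\<close>)
      then show ?case by simp
    qed
  qed
  finally show "AE x in M \<star> N. 0 \<le> x"
    by (intro AE_I[where N="{..<0}"]) auto
qed

lemma lt_mult:
  assumes "is_laplace_transform_prob f" and "is_laplace_transform_prob g"
  shows "is_laplace_transform_prob (\<lambda>s. f s * g s)"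
proof -
  obtain M where M: "prob_space M" "sets M = sets borel" "AE x in M. 0 \<le> x"
    and f: "\<And>s. s \<ge> 0 \<Longrightarrow> f s = (\<integral>x. exp (- s * x) \<partial>M)"
    using assms(1) unfolding is_laplace_transform_prob_def by blast
  obtain N where N: "prob_space N" "sets N = sets borel" "AE x in N. 0 \<le> x"
    and g: "\<And>s. s \<ge> 0 \<Longrightarrow> g s = (\<integral>x. exp (- s * x) \<partial>N)"
    using assms(2) unfolding is_laplace_transform_prob_def by blast
  note MN = convolution_nonneg_prob[OF M N]
  note [measurable_cong] = M(2) N(2)
  have laplace_nn: "(\<integral>x. exp (- s * x) \<partial>K) = enn2real (\<integral>\<^sup>+x. ennreal (exp (- s * x)) \<partial>K)"
    if "sets K = sets borel" for K :: "real measure" and s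
    using that by (intro integral_eq_nn_integral) auto
  show ?thesis unfolding is_laplace_transform_prob_def
  proof (intro exI conjI allI impI)
    fix s :: real assume s: "s \<ge> 0"
    have "(\<integral>\<^sup>+x. ennreal (exp (- s * x)) \<partial>(M \<star> N)) =
        (\<integral>\<^sup>+x. \<integral>\<^sup>+y. ennreal (exp (- s * x)) * ennreal (exp (- s * y)) \<partial>N \<partial>M)"
      by (simp add: MN(3) ennreal_mult[symmetric] exp_add[symmetric] algebra_simps)
    also have "\<dots> = (\<integral>\<^sup>+x. ennreal (exp (- s * x)) * (\<integral>\<^sup>+y. ennreal (exp (- s * y)) \<partial>N) \<partial>M)"
      by (intro nn_integral_cong nn_integral_cmult) measurable
    also have "\<dots> = (\<integral>\<^sup>+x. ennreal (exp (- s * x)) \<partial>M) * (\<integral>\<^sup>+y. ennreal (exp (- s * y)) \<partial>N)"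
      by (rule nn_integral_multc) measurable
    finally have product: "(\<integral>\<^sup>+x. ennreal (exp (- s * x)) \<partial>(M \<star> N)) =
        (\<integral>\<^sup>+x. ennreal (exp (- s * x)) \<partial>M) * (\<integral>\<^sup>+y. ennreal (exp (- s * y)) \<partial>N)" .
    have sets_MN: "sets (M \<star> N) = sets borel" by simp
    show "f s * g s = (\<integral>x. exp (- s * x) \<partial>(M \<star> N))"
      unfolding f[OF s] g[OF s] laplace_nn[OF M(2)] laplace_nn[OF N(2)] laplace_nn[OF sets_MN] product
      by (simp add: enn2real_mult)
  qed (use MN in simp_all)
qed

lemma lt_power: "is_laplace_transform_prob g \<Longrightarrow> is_laplace_transform_prob (\<lambda>s. g s ^ n)"
  by (induction n) (simp_all add: lt_one lt_mult)

lemma lt_prod: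
  assumes "finite A" and "\<And>k. k \<in> A \<Longrightarrow> is_laplace_transform_prob (f k)"
  shows "is_laplace_transform_prob (\<lambda>s. \<Prod>k\<in>A. f k s)"
  using assms by (induction A rule: finite_induct) (simp_all add: lt_one lt_mult)

text \<open>Pushing a probability density on the real line forward along x \<mapsto> max 0 x gives a law on
  [0,\<infinity>); this is how an atom at 0 is produced from a density.\<close>
lemma lt_of_clamped_density:
  fixes D :: "real \<Rightarrow> real"
  assumes D_meas[measurable]: "D \<in> borel_measurable borel" and D_nonneg: "\<And>x. 0 \<le> D x"
    and D_int: "integrable lborel D" and D_total: "(\<integral>x. D x \<partial>lborel) = 1"
  shows "is_laplace_transform_prob (\<lambda>s. \<integral>x. D x * exp (- s * max 0 x) \<partial>lborel)"
proof -
  define M0 where "M0 = density lborel (\<lambda>x. ennreal (D x))"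
  have "emeasure M0 (space M0) = (\<integral>\<^sup>+x. ennreal (D x) \<partial>lborel)"
    unfolding M0_def by (simp add: emeasure_density)
  also have "\<dots> = 1"
    using D_int D_nonneg D_total by (subst nn_integral_eq_integral) auto
  finally interpret M0: prob_space M0 by (intro prob_spaceI)
  define M where "M = distr M0 borel (\<lambda>x. max 0 x)"
  show ?thesis
    unfolding is_laplace_transform_prob_def
  proof (intro exI[of _ M] conjI allI impI)
    show "prob_space M" unfolding M_def by (rule M0.prob_space_distr) (simp add: M0_def)
    show "sets M = sets borel" by (simp add: M_def)
    show "AE x in M. 0 \<le> x"
      unfolding M_def by (subst AE_distr_iff) (auto simp: M0_def)
    show "(\<integral>x. D x * exp (- s * max 0 x) \<partial>lborel) = (\<integral>y. exp (- s * y) \<partial>M)" for s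
      unfolding M_def M0_def using D_nonneg by (simp add: integral_distr integral_density)
  qed
qed

text \<open>Compound-Poisson building block: a sub-probability density F on [0,\<infinity>), completed by
  an atom of mass 1 - \<integral>F at 0 (the clamped image of uniform mass on [-1,0)), has Laplace
  transform 1 - \<integral> F(x)(1 - e^(-sx)) dx.\<close>
lemma lt_from_subprob_density:
  fixes F :: "real \<Rightarrow> real"
  assumes F_meas[measurable]: "F \<in> borel_measurable borel" and F_nonneg: "\<And>x. 0 \<le> F x"
    and F_support: "\<And>x. x < 0 \<Longrightarrow> F x = 0"
    and F_int: "integrable lborel F" and F_total: "(\<integral>x. F x \<partial>lborel) \<le> 1"
  shows "is_laplace_transform_prob (\<lambda>s. 1 - (\<integral>x. F x * (1 - exp (- s * x)) \<partial>lborel))"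
proof -
  define p where "p = (\<integral>x. F x \<partial>lborel)"
  define D where "D x = (1 - p) * indicator {-1..<0} x + F x" for x :: real
  have atom_int: "integrable lborel (\<lambda>x. (1 - p) * indicator {-1..<0::real} x)"
    by (intro integrable_mult_right) (simp add: integrable_indicator_iff)
  have "is_laplace_transform_prob (\<lambda>s. \<integral>x. D x * exp (- s * max 0 x) \<partial>lborel)"
  proof (rule lt_of_clamped_density)
    show "0 \<le> D x" for x
      unfolding D_def p_def using F_total F_nonneg by (intro add_nonneg_nonneg) auto
    show "(\<integral>x. D x \<partial>lborel) = 1"
      unfolding D_def using atom_int F_int by (simp add: p_def)
  qed (use atom_int F_int in \<open>simp_all add: D_def\<close>)
  moreover have "(\<integral>x. D x * exp (- s * max 0 x) \<partial>lborel) = 1 - (\<integral>x. F x * (1 - exp (- s * x)) \<partial>lborel)"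
    if s: "s \<ge> 0" for s
  proof -
    have FE_int: "integrable lborel (\<lambda>x. F x * exp (- s * x))"
    proof (rule Bochner_Integration.integrable_bound[OF F_int])
      show "AE x in lborel. norm (F x * exp (- s * x)) \<le> norm (F x)"
      proof (intro AE_I2)
        fix x :: real
        have "F x * exp (- s * x) \<le> F x"
        proof (cases "x < 0")
          case False
          then show ?thesis using s F_nonneg[of x] by (intro mult_left_le) (auto simp: mult_nonneg_nonneg)
        qed (simp add: F_support)
        then show "norm (F x * exp (- s * x)) \<le> norm (F x)" using F_nonneg[of x] by simp
      qed
    qed simp
    have "(\<integral>x. D x * exp (- s * max 0 x) \<partial>lborel)
        = (\<integral>x. (1 - p) * indicator {-1..<0} x + F x * exp (- s * x) \<partial>lborel)"
      by (rule Bochner_Integration.integral_cong) (auto simp: D_def indicator_def F_support)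
    also have "\<dots> = (1 - p) + (\<integral>x. F x * exp (- s * x) \<partial>lborel)"
      using atom_int FE_int by simp
    also have "\<dots> = 1 - (\<integral>x. F x * (1 - exp (- s * x)) \<partial>lborel)"
      using F_int FE_int by (simp add: right_diff_distrib p_def)
    finally show ?thesis .
  qed
  ultimately show ?thesis by (rule lt_cong)
qed

lemma laplace_tail_bound:
  fixes M :: "real measure"
  assumes "prob_space M" and sets_M: "sets M = sets borel" and nonneg: "AE x in M. 0 \<le> x"
    and s: "s > 0"
  shows "measure M {1/s<..} \<le> (1 - (\<integral>x. exp (- s * x) \<partial>M)) / (1 - exp (-1))"
proof -
  interpret prob_space M by fact
  have bound: "AE x in M. (1 - exp (-1)) * indicator {1/s<..} x \<le> 1 - exp (- s * x)"
    using nonneg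
  proof eventually_elim
    case (elim x)
    show ?case
    proof (cases "x > 1/s")
      case True
      then have "exp (- s * x) < exp (-1)" using s by (simp add: field_simps)
      then show ?thesis using True by simp
    next
      case False
      have "exp (- s * x) \<le> 1" using s elim by simp
      then show ?thesis using False by simp
    qed
  qed
  have int_exp: "integrable M (\<lambda>x. exp (- s * x))"
  proof (rule integrable_const_bound[where B=1])
    show "AE x in M. norm (exp (- s * x)) \<le> 1"
      using nonneg by eventually_elim (use s in simp)
  qed (simp add: measurable_cong_sets[OF sets_M refl])
  have "(1 - exp (-1)) * measure M {1/s<..} = (\<integral>x. (1 - exp (-1)) * indicator {1/s<..} x \<partial>M)"
    using sets_M by simp
  also have "\<dots> \<le> (\<integral>x. 1 - exp (- s * x) \<partial>M)"
    using bound int_exp sets_M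
    by (intro integral_mono_AE) (auto intro!: integrable_mult_right simp: integrable_indicator_iff less_top[symmetric])
  also have "\<dots> = 1 - (\<integral>x. exp (- s * x) \<partial>M)"
    using int_exp by (simp add: prob_space)
  finally show ?thesis by (simp add: field_simps)
qed

lemma real_distribution_upper_tail:
  assumes "real_distribution R" and "e > 0"
  shows "\<exists>K. measure R {K<..} < e"
proof -
  interpret real_distribution R by fact
  have "eventually (\<lambda>x. cdf R x > 1 - e) at_top"
    using cdf_lim_at_top_prob assms(2) by (intro order_tendstoD(1)) auto
  then obtain K where K: "cdf R K > 1 - e" by (auto simp: eventually_at_top_linorder)
  have "measure R {K<..} = 1 - cdf R K"
    using prob_compl[of "{..K}"] by (simp add: cdf_def Compl_eq_Diff_UNIV[symmetric] Compl_atMost)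
  then show ?thesis using K by (intro exI[of _ K]) linarith
qed

lemma tight_if_uniform_upper_tails:
  fixes M :: "nat \<Rightarrow> real measure"
  assumes rd: "\<And>n. real_distribution (M n)" and nonneg: "\<And>n. AE x in M n. 0 \<le> x"
    and tails: "\<And>e. e > 0 \<Longrightarrow> \<exists>K. \<forall>n. measure (M n) {K<..} < e"
  shows "tight M"
  unfolding tight_def
proof (intro conjI allI impI rd)
  fix e :: real assume "e > 0"
  then obtain K where K: "\<And>n. measure (M n) {K<..} < e" using tails by blast
  show "\<exists>a b. a < b \<and> (\<forall>n. 1 - e < measure (M n) {a<..b})"
  proof (rule exI[of _ "-1"], rule exI[of _ "max K 0"], intro conjI allI)
    fix n
    interpret real_distribution "M n" by (rule rd)
    have "1 = measure (M n) {0..}"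
      using nonneg[of n] by (intro prob_eq_1[THEN iffD2, symmetric]) auto
    also have "\<dots> \<le> measure (M n) ({-1<..max K 0} \<union> {K<..})"
      by (intro finite_measure_mono) auto
    also have "\<dots> \<le> measure (M n) {-1<..max K 0} + measure (M n) {K<..}"
      by (intro measure_Un_le) auto
    finally show "1 - e < measure (M n) {-1<..max K 0}" using K[of n] by linarith
  qed simp
qed

lemma uniform_upper_tail_if_eventual:
  fixes M :: "nat \<Rightarrow> real measure"
  assumes rd: "\<And>n. real_distribution (M n)" and e: "e > 0"
    and eventual: "\<And>n. n \<ge> N0 \<Longrightarrow> measure (M n) {K0<..} < e"
  shows "\<exists>K. \<forall>n. measure (M n) {K<..} < e"
proof -
  obtain Kn where Kn: "\<And>n. measure (M n) {Kn n<..} < e"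
    using real_distribution_upper_tail[OF rd e] by metis
  define K where "K = Max (insert K0 (Kn ` {..<N0}))"
  have "measure (M n) {K<..} < e" for n
  proof -
    interpret real_distribution "M n" by (rule rd)
    have mono: "measure (M n) {K<..} \<le> measure (M n) {K'<..}" if "K' \<le> K" for K'
      using that by (intro finite_measure_mono) auto
    show ?thesis
    proof (cases "n < N0")
      case True
      then have "Kn n \<le> K" unfolding K_def by (intro Max_ge) auto
      then show ?thesis using mono Kn[of n] by fastforce
    next
      case False
      have "K0 \<le> K" unfolding K_def by (intro Max_ge) auto
      then show ?thesis using mono eventual[of n] False by fastforce
    qed
  qed
  then show ?thesis by blast
qed

lemma laplace_convergence_tight:
  fixes M :: "nat \<Rightarrow> real measure"
  assumes rd: "\<And>n. real_distribution (M n)" and nonneg: "\<And>n. AE x in M n. 0 \<le> x"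
    and conv: "\<And>s. s \<ge> 0 \<Longrightarrow> (\<lambda>n. \<integral>x. exp (- s * x) \<partial>M n) \<longlonglongrightarrow> g s"
    and cont: "(g \<longlongrightarrow> 1) (at_right 0)"
  shows "tight M"
proof (rule tight_if_uniform_upper_tails[OF rd nonneg])
  fix e :: real assume e: "e > 0"
  define c :: real where "c = 1 - exp (-1)"
  have c: "c > 0" by (simp add: c_def)
  have "eventually (\<lambda>s. g s > 1 - c * e / 2) (at_right 0)"
    using cont c e by (intro order_tendstoD(1)) auto
  then obtain s0 where s0: "s0 > 0" "g s0 > 1 - c * e / 2"
    by (auto simp: eventually_at_right_field) (metis field_lbound_gt_zero)
  have "eventually (\<lambda>n. (\<integral>x. exp (- s0 * x) \<partial>M n) > 1 - c * e) sequentially"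
    using conv[of s0] s0 mult_pos_pos[OF c e] by (intro order_tendstoD(1)) auto
  then obtain N0 where N0: "\<And>n. n \<ge> N0 \<Longrightarrow> (\<integral>x. exp (- s0 * x) \<partial>M n) > 1 - c * e"
    by (auto simp: eventually_sequentially)
  have "measure (M n) {1/s0<..} < e" if "n \<ge> N0" for n
  proof -
    interpret real_distribution "M n" by (rule rd)
    have "measure (M n) {1/s0<..} \<le> (1 - (\<integral>x. exp (- s0 * x) \<partial>M n)) / c"
      unfolding c_def by (rule laplace_tail_bound[OF prob_space_axioms events_eq_borel nonneg s0(1)])
    also have "\<dots> < e" using N0[OF that] c by (simp add: field_simps)
    finally show ?thesis .
  qed
  then show "\<exists>K. \<forall>n. measure (M n) {K<..} < e"
    by (rule uniform_upper_tail_if_eventual[OF rd e])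
qed

text \<open>Integrals against laws on [0,\<infinity>) only see a test function on [0,\<infinity>); a bounded continuous
  extension therefore transfers weak convergence.\<close>
lemma weak_conv_integral_on_nonneg:
  fixes M :: "nat \<Rightarrow> real measure" and f g :: "real \<Rightarrow> real"
  assumes rd: "\<And>n. real_distribution (M n)" and L: "real_distribution L"
    and nonneg: "\<And>n. AE x in M n. 0 \<le> x" and wc: "weak_conv_m M L"
    and f: "\<And>x. isCont f x" "\<And>x. \<bar>f x\<bar> \<le> 1"
    and agree: "\<And>x. 0 \<le> x \<Longrightarrow> f x = g x" and g_meas[measurable]: "g \<in> borel_measurable borel"
  shows "(\<lambda>n. \<integral>x. g x \<partial>M n) \<longlonglongrightarrow> (\<integral>x. f x \<partial>L)"
proof -
  have sets_M[measurable_cong]: "sets (M n) = sets borel" for n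
    using real_distribution.events_eq_borel[OF rd] .
  have [measurable]: "f \<in> borel_measurable borel"
    using f(1) by (intro borel_measurable_continuous_onI continuous_at_imp_continuous_on) auto
  have "(\<lambda>n. \<integral>x. f x \<partial>M n) \<longlonglongrightarrow> (\<integral>x. f x \<partial>L)"
    using weak_conv_imp_integral_bdd_continuous_conv[OF rd L wc f(1)] f(2) by auto
  moreover have "(\<integral>x. f x \<partial>M n) = (\<integral>x. g x \<partial>M n)" for n
    using nonneg[of n] agree by (intro integral_cong_AE) auto
  ultimately show ?thesis by simp
qed

text \<open>A weak limit of laws on [0,\<infinity>) lives on [0,\<infinity>), and their Laplace transforms converge
  to its Laplace transform (test against bounded continuous extensions from [0,\<infinity>)).\<close>
lemma weak_limit_laplace:
  fixes M :: "nat \<Rightarrow> real measure"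
  assumes rd: "\<And>n. real_distribution (M n)" and L: "real_distribution L"
    and nonneg: "\<And>n. AE x in M n. 0 \<le> x" and wc: "weak_conv_m M L"
  shows "AE x in L. 0 \<le> x"
    and "\<And>s. s \<ge> 0 \<Longrightarrow> (\<lambda>n. \<integral>x. exp (- s * x) \<partial>M n) \<longlonglongrightarrow> (\<integral>x. exp (- s * x) \<partial>L)"
proof -
  interpret L: real_distribution L by (rule L)
  note conv_on_nonneg = weak_conv_integral_on_nonneg[OF rd L nonneg wc]
  define neg_part :: "real \<Rightarrow> real" where "neg_part x = min 1 (max 0 (- x))" for x
  have [measurable]: "neg_part \<in> borel_measurable borel" unfolding neg_part_def by measurable
  have "(\<lambda>n. \<integral>x. 0 \<partial>M n) \<longlonglongrightarrow> (\<integral>x. neg_part x \<partial>L)"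
    by (rule conv_on_nonneg) (auto simp: neg_part_def intro!: continuous_intros)
  then have "(\<integral>x. neg_part x \<partial>L) = 0"
    using LIMSEQ_unique[OF tendsto_const] by force
  moreover have "integrable L neg_part"
    by (rule L.integrable_const_bound[where B=1]) (auto simp: neg_part_def)
  ultimately have "AE x in L. neg_part x = 0"
    by (subst integral_nonneg_eq_0_iff_AE[symmetric]) (auto simp: neg_part_def[abs_def])
  then show L_nonneg: "AE x in L. 0 \<le> x"
    by eventually_elim (auto simp: neg_part_def min_def max_def split: if_splits)
  fix s :: real assume s: "s \<ge> 0"
  define f where "f x = exp (- s * max 0 x)" for x
  have "(\<lambda>n. \<integral>x. exp (- s * x) \<partial>M n) \<longlonglongrightarrow> (\<integral>x. f x \<partial>L)"
    by (rule conv_on_nonneg) (use s in \<open>auto simp: f_def intro!: continuous_intros\<close>)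
  also have "(\<integral>x. f x \<partial>L) = (\<integral>x. exp (- s * x) \<partial>L)"
  proof (rule integral_cong_AE)
    show "AE x in L. f x = exp (- s * x)" using L_nonneg by eventually_elim (simp add: f_def)
  qed (simp_all add: f_def)
  finally show "(\<lambda>n. \<integral>x. exp (- s * x) \<partial>M n) \<longlonglongrightarrow> (\<integral>x. exp (- s * x) \<partial>L)" .
qed

lemma lt_limit:
  fixes G :: "nat \<Rightarrow> real \<Rightarrow> real" and g :: "real \<Rightarrow> real"
  assumes lt: "\<And>n. is_laplace_transform_prob (G n)"
    and conv: "\<And>s. s \<ge> 0 \<Longrightarrow> (\<lambda>n. G n s) \<longlonglongrightarrow> g s"
    and cont: "(g \<longlongrightarrow> 1) (at_right 0)"
  shows "is_laplace_transform_prob g"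
proof -
  obtain M where M: "\<And>n. prob_space (M n)" "\<And>n. sets (M n) = sets borel"
    and nonneg: "\<And>n. AE x in M n. 0 \<le> x"
    and G: "\<And>n s. s \<ge> 0 \<Longrightarrow> G n s = (\<integral>x. exp (- s * x) \<partial>M n)"
    using lt unfolding is_laplace_transform_prob_def by metis
  have rd: "real_distribution (M n)" for n
    using M by (simp add: real_distribution_def real_distribution_axioms_def)
  have "tight M"
    using rd nonneg _ cont by (rule laplace_convergence_tight) (use conv G in simp)
  then obtain r L where r: "strict_mono r" and L: "real_distribution L"
    and wc: "weak_conv_m (M \<circ> r) L"
    using tight_imp_convergent_subsubsequence[OF \<open>tight M\<close> strict_mono_id] by auto
  note lim = weak_limit_laplace[of "M \<circ> r", OF _ L _ wc, unfolded o_def]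
  show ?thesis
    unfolding is_laplace_transform_prob_def
  proof (intro exI[of _ L] conjI allI impI)
    interpret real_distribution L by (rule L)
    show "prob_space L" "sets L = sets borel" by unfold_locales simp
    show "AE x in L. 0 \<le> x" using lim(1) rd nonneg by blast
    fix s :: real assume s: "s \<ge> 0"
    have "(\<lambda>n. G (r n) s) \<longlonglongrightarrow> (\<integral>x. exp (- s * x) \<partial>L)"
      using lim(2)[OF rd nonneg s] by (simp add: G[OF s])
    moreover have "(\<lambda>n. G (r n) s) \<longlonglongrightarrow> g s"
      using LIMSEQ_subseq_LIMSEQ[OF conv[OF s] r] by (simp add: o_def)
    ultimately show "g s = (\<integral>x. exp (- s * x) \<partial>L)" using LIMSEQ_unique by blast
  qed
qed

text \<open>With z_n = y_n/N_n \<rightarrow> 0, the remainder N_n (ln(1 - z_n) + z_n) is O(y_n z_n) and vanishes.\<close>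
lemma log_remainder_limit:
  fixes y :: "nat \<Rightarrow> real" and N :: "nat \<Rightarrow> nat"
  assumes y: "y \<longlonglongrightarrow> L" and N: "filterlim N at_top sequentially"
  shows "(\<lambda>n. real (N n) * (ln (1 - y n / real (N n)) + y n / real (N n))) \<longlonglongrightarrow> 0"
    and "eventually (\<lambda>n. \<bar>y n / real (N n)\<bar> \<le> 1/2 \<and> real (N n) > 0) sequentially"
proof -
  have N_real: "filterlim (\<lambda>n. real (N n)) at_top sequentially"
    by (rule filterlim_compose[OF filterlim_real_sequentially N])
  define z where "z n = y n / real (N n)" for n
  have z: "z \<longlonglongrightarrow> 0" unfolding z_def
    by (rule tendsto_divide_0[OF y filterlim_at_top_imp_at_infinity[OF N_real]])
  have "eventually (\<lambda>n. \<bar>z n\<bar> \<le> 1/2) sequentially"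
    using tendstoD[OF z, of "1/2"] by (simp add: dist_real_def) (auto elim: eventually_mono)
  moreover have "eventually (\<lambda>n. real (N n) > 0) sequentially"
    using N_real unfolding filterlim_at_top_dense by (metis of_nat_0 of_nat_less_iff)
  ultimately show small: "eventually (\<lambda>n. \<bar>y n / real (N n)\<bar> \<le> 1/2 \<and> real (N n) > 0) sequentially"
    by eventually_elim (simp add: z_def)
  show "(\<lambda>n. real (N n) * (ln (1 - y n / real (N n)) + y n / real (N n))) \<longlonglongrightarrow> 0"
    unfolding z_def[symmetric]
  proof (rule Lim_null_comparison)
    show "eventually (\<lambda>n. norm (real (N n) * (ln (1 - z n) + z n)) \<le> 2 * \<bar>y n\<bar> * \<bar>z n\<bar>) sequentially"
      using small
    proof eventually_elim
      case (elim n)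
      have "\<bar>ln (1 + (- z n)) - (- z n)\<bar> \<le> 2 * (- z n)\<^sup>2"
        by (rule abs_ln_one_plus_x_minus_x_bound) (use elim in \<open>simp add: z_def\<close>)
      then have "norm (real (N n) * (ln (1 - z n) + z n)) \<le> real (N n) * (2 * (z n)\<^sup>2)"
        using elim by (simp add: abs_mult)
      also have "\<dots> = 2 * \<bar>y n\<bar> * \<bar>z n\<bar>"
        using elim by (simp add: z_def power2_eq_square abs_mult field_simps)
      finally show ?case .
    qed
    show "(\<lambda>n. 2 * \<bar>y n\<bar> * \<bar>z n\<bar>) \<longlonglongrightarrow> 0"
      using tendsto_mult[OF tendsto_mult[OF tendsto_const tendsto_rabs[OF y]] tendsto_rabs_zero[OF z]] by simp
  qed
qed

lemma pow_exp_limit: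
  fixes y :: "nat \<Rightarrow> real" and N :: "nat \<Rightarrow> nat"
  assumes y: "y \<longlonglongrightarrow> L" and N: "filterlim N at_top sequentially"
  shows "(\<lambda>n. (1 - y n / real (N n)) ^ N n) \<longlonglongrightarrow> exp (- L)"
proof -
  define w where "w n = real (N n) * (ln (1 - y n / real (N n)) + y n / real (N n))" for n
  have "(\<lambda>n. - y n + w n) \<longlonglongrightarrow> - L + 0"
    unfolding w_def by (intro tendsto_add tendsto_minus y log_remainder_limit(1)[OF y N])
  then have "(\<lambda>n. exp (- y n + w n)) \<longlonglongrightarrow> exp (- L)"
    by (intro tendsto_exp) simp
  moreover have "eventually (\<lambda>n. exp (- y n + w n) = (1 - y n / real (N n)) ^ N n) sequentially"
    using log_remainder_limit(2)[OF y N]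
  proof eventually_elim
    case (elim n)
    then have "1 - y n / real (N n) > 0" by linarith
    moreover have "- y n + w n = real (N n) * ln (1 - y n / real (N n))"
      unfolding w_def using elim by (simp add: field_simps)
    ultimately show ?case by (simp add: ln_realpow[symmetric])
  qed
  ultimately show ?thesis by (rule Lim_transform_eventually)
qed

text \<open>Compound Poisson approximation: if jump densities F_n on [0,\<infinity>) satisfy
  \<integral> F_n(x)(1 - e^(-sx)) dx \<rightarrow> \<psi>(s) with \<psi>(0+) = 0, then e^(-\<psi>) is a Laplace transform. With
  N_n \<ge> \<integral>F_n, the N_n-th power of the building block for F_n/N_n converges to e^(-\<psi>).\<close>
lemma lt_exp_of_levy_limit:
  fixes F :: "nat \<Rightarrow> real \<Rightarrow> real" and \<psi> :: "real \<Rightarrow> real"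
  assumes F_meas: "\<And>n. F n \<in> borel_measurable borel" and F_nonneg: "\<And>n x. 0 \<le> F n x"
    and F_support: "\<And>n x. x < 0 \<Longrightarrow> F n x = 0" and F_int: "\<And>n. integrable lborel (F n)"
    and exponent: "\<And>s. s \<ge> 0 \<Longrightarrow> (\<lambda>n. \<integral>x. F n x * (1 - exp (- s * x)) \<partial>lborel) \<longlonglongrightarrow> \<psi> s"
    and cont: "(\<psi> \<longlongrightarrow> 0) (at_right 0)"
  shows "is_laplace_transform_prob (\<lambda>s. exp (- \<psi> s))"
proof -
  define N where "N n = nat \<lceil>\<integral>x. F n x \<partial>lborel\<rceil> + Suc n" for n
  have N_pos: "real (N n) > 0" for n by (simp add: N_def)
  have N_bound: "(\<integral>x. F n x \<partial>lborel) \<le> real (N n)" for n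
    unfolding N_def by linarith
  have N_lim: "filterlim N at_top sequentially"
    by (rule filterlim_at_top_mono[OF filterlim_ident]) (auto simp: N_def)
  define y where "y n s = (\<integral>x. F n x * (1 - exp (- s * x)) \<partial>lborel)" for n s
  have step: "is_laplace_transform_prob (\<lambda>s. (1 - y n s / real (N n)) ^ N n)" for n
  proof (rule lt_power)
    have "is_laplace_transform_prob (\<lambda>s. 1 - (\<integral>x. F n x / real (N n) * (1 - exp (- s * x)) \<partial>lborel))"
      using F_meas F_nonneg F_support F_int N_bound[of n] N_pos[of n]
      by (intro lt_from_subprob_density) auto
    then show "is_laplace_transform_prob (\<lambda>s. 1 - y n s / real (N n))"
      by (rule lt_cong) (simp add: y_def algebra_simps)
  qed
  show ?thesis
  proof (rule lt_limit[OF step])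
    show "(\<lambda>n. (1 - y n s / real (N n)) ^ N n) \<longlonglongrightarrow> exp (- \<psi> s)" if "s \<ge> 0" for s
      using exponent[OF that] N_lim unfolding y_def by (rule pow_exp_limit)
    show "((\<lambda>s. exp (- \<psi> s)) \<longlongrightarrow> 1) (at_right 0)"
      using tendsto_exp[OF tendsto_minus[OF cont]] by simp
  qed
qed

definition levy_density :: "real \<Rightarrow> real \<Rightarrow> real \<Rightarrow> real" where
  "levy_density \<beta> h x = x powr (-1 - \<beta>) * exp (- h * x)"

lemma levy_density_nonneg: "0 \<le> levy_density \<beta> h x"
  unfolding levy_density_def by simp

lemma levy_density_measurable[measurable]: "levy_density \<beta> h \<in> borel_measurable borel"
  unfolding levy_density_def by measurable

text \<open>Away from 0 the Levy density is continuous, hence integrable on compact intervals.\<close>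
lemma levy_density_integrable_on_interval:
  assumes "a > 0" and "\<And>x. isCont g x"
  shows "integrable lborel (\<lambda>x. levy_density \<beta> h x * g x * indicator {a..b} x)"
  by (rule borel_integrable_atLeastAtMost)
     (use assms in \<open>auto simp: levy_density_def intro!: continuous_intros\<close>)

lemma gamma_scaled:
  fixes a t :: real
  assumes a: "a > 0" and t: "t > 0"
  shows "(\<integral>\<^sup>+x. ennreal (x powr (a - 1) * exp (- t * x)) * indicator {0<..} x \<partial>lborel)
         = ennreal (Gamma a / t powr a)"
proof -
  define f :: "real \<Rightarrow> ennreal" where "f y = ennreal (indicator {0..} y * y powr (a - 1) / exp y)" for y
  have fm: "f \<in> borel_measurable borel" unfolding f_def by measurable
  have "ennreal (Gamma a) = (\<integral>\<^sup>+y. f y \<partial>lborel)"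
    unfolding f_def using Gamma_conv_nn_integral_real[OF a] by simp
  also have "\<dots> = ennreal t * (\<integral>\<^sup>+x. f (0 + t * x) \<partial>lborel)"
    using nn_integral_real_affine[OF fm, of t 0] t by simp
  also have "(\<integral>\<^sup>+x. f (0 + t * x) \<partial>lborel) =
      (\<integral>\<^sup>+x. ennreal (t powr (a - 1)) * (ennreal (x powr (a - 1) * exp (- t * x)) * indicator {0<..} x) \<partial>lborel)"
  proof (rule nn_integral_cong)
    fix x :: real
    show "f (0 + t * x) = ennreal (t powr (a - 1)) * (ennreal (x powr (a - 1) * exp (- t * x)) * indicator {0<..} x)"
    proof (cases "x > 0")
      case True
      then show ?thesis using t
        by (simp add: f_def powr_mult exp_minus field_simps) (subst ennreal_mult[symmetric], auto)
    next
      case False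
      then show ?thesis using t
        by (cases "x = 0") (auto simp: f_def indicator_def zero_le_mult_iff)
    qed
  qed
  also have "\<dots> = ennreal (t powr (a - 1)) * (\<integral>\<^sup>+x. ennreal (x powr (a - 1) * exp (- t * x)) * indicator {0<..} x \<partial>lborel)"
    by (rule nn_integral_cmult) measurable
  finally have "ennreal (Gamma a) = ennreal (t * t powr (a - 1)) *
      (\<integral>\<^sup>+x. ennreal (x powr (a - 1) * exp (- t * x)) * indicator {0<..} x \<partial>lborel)"
    using t by (simp add: ennreal_mult mult.assoc)
  also have "t * t powr (a - 1) = t powr a"
    using t by (simp add: powr_diff)
  finally have "ennreal (1 / t powr a) * ennreal (Gamma a) =
      (\<integral>\<^sup>+x. ennreal (x powr (a - 1) * exp (- t * x)) * indicator {0<..} x \<partial>lborel)"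
    using t by (simp add: mult.assoc[symmetric] ennreal_mult[symmetric])
  then show ?thesis
    using Gamma_real_pos[OF a] t by (simp add: ennreal_mult[symmetric])
qed

text \<open>x^(-1-\<beta>) e^(-hx)(1 - e^(-sx)) = \<integral>_h^(h+s) x^(-\<beta>) e^(-tx) dt, the representation used for Fubini.\<close>
lemma levy_density_times_increment:
  fixes \<beta> h s x :: real
  assumes x: "x > 0" and s: "s \<ge> 0"
  shows "ennreal (levy_density \<beta> h x * (1 - exp (- s * x))) =
         (\<integral>\<^sup>+t. ennreal (x powr (- \<beta>) * exp (- t * x) * indicator {h..h+s} t) \<partial>lborel)"
proof -
  define f where "f t = x powr (- \<beta>) * exp (- t * x)" for t
  define F where "F t = - (x powr (-1 - \<beta>)) * exp (- t * x)" for t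
  have x_power: "x powr (-1 - \<beta>) * x = x powr (- \<beta>)"
    using x by (simp add: powr_add[of x "-1-\<beta>" 1, simplified])
  have F_deriv: "(F has_real_derivative f t) (at t)" for t
  proof -
    have "((\<lambda>t. exp (- t * x)) has_real_derivative (exp (- t * x) * (- x))) (at t)"
      by (auto intro!: derivative_eq_intros)
    then have "(F has_real_derivative (- (x powr (-1 - \<beta>)) * (exp (- t * x) * (- x)))) (at t)"
      unfolding F_def by (rule DERIV_cmult)
    moreover have "- (x powr (-1 - \<beta>)) * (exp (- t * x) * (- x)) = f t"
      unfolding f_def using x_power by (simp add: algebra_simps)
    ultimately show ?thesis by simp
  qed
  have cont: "isCont f t" for t unfolding f_def by (intro continuous_intros)
  have "(\<integral>t. f t * indicator {h..h+s} t \<partial>lborel) = (\<integral>t. indicator {h..h+s} t *\<^sub>R f t \<partial>lborel)"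
    by (simp add: mult.commute)
  also have "\<dots> = F (h + s) - F h"
    using s cont F_deriv
    by (intro integral_FTC_atLeastAtMost)
       (auto simp: has_real_derivative_iff_has_vector_derivative[symmetric]
          intro: has_field_derivative_at_within continuous_at_imp_continuous_on)
  also have "\<dots> = levy_density \<beta> h x * (1 - exp (- s * x))"
    unfolding F_def levy_density_def by (simp add: algebra_simps exp_add[symmetric])
  finally have "ennreal (levy_density \<beta> h x * (1 - exp (- s * x))) =
      ennreal (\<integral>t. f t * indicator {h..h+s} t \<partial>lborel)" by simp
  also have "\<dots> = (\<integral>\<^sup>+t. ennreal (f t * indicator {h..h+s} t) \<partial>lborel)"
    using cont by (intro nn_integral_eq_integral[symmetric] borel_integrable_atLeastAtMost)
                  (auto simp: f_def)
  finally show ?thesis by (simp add: f_def)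
qed

lemma nn_integral_powr_interval:
  fixes \<beta> a b :: real
  assumes b: "0 < \<beta>" and a: "0 < a" "a \<le> b"
  shows "(\<integral>\<^sup>+t. ennreal (t powr (\<beta> - 1) * indicator {a..b} t) \<partial>lborel)
         = ennreal ((b powr \<beta> - a powr \<beta>) / \<beta>)"
proof -
  define F where "F t = t powr \<beta> / \<beta>" for t :: real
  have F_deriv: "(F has_real_derivative t powr (\<beta> - 1)) (at t)" if "t > 0" for t
    unfolding F_def using that b by (auto intro!: derivative_eq_intros)
  have cont: "continuous_on {a..b} (\<lambda>t. t powr (\<beta> - 1))"
    using a by (intro continuous_intros) auto
  have "(\<integral>t. t powr (\<beta> - 1) * indicator {a..b} t \<partial>lborel) = (\<integral>t. indicator {a..b} t *\<^sub>R t powr (\<beta> - 1) \<partial>lborel)"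
    by (simp add: mult.commute)
  also have "\<dots> = F b - F a"
    using a F_deriv cont
    by (intro integral_FTC_atLeastAtMost)
       (auto simp: has_real_derivative_iff_has_vector_derivative[symmetric] intro: has_field_derivative_at_within)
  finally have "(\<integral>t. t powr (\<beta> - 1) * indicator {a..b} t \<partial>lborel) = (b powr \<beta> - a powr \<beta>) / \<beta>"
    by (simp add: F_def diff_divide_distrib)
  moreover have "integrable lborel (\<lambda>t. t powr (\<beta> - 1) * indicator {a..b} t)"
    using a by (intro borel_integrable_atLeastAtMost continuous_intros) auto
  ultimately show ?thesis
    by (subst nn_integral_eq_integral) auto
qed

lemma levy_exponent_nn:
  fixes \<beta> h s :: real
  assumes b: "0 < \<beta>" "\<beta> < 1" and h: "h > 0" and s: "s \<ge> 0"
  shows "(\<integral>\<^sup>+x. ennreal (levy_density \<beta> h x * (1 - exp (- s * x)) * indicator {0<..} x) \<partial>lborel)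
       = ennreal (Gamma (1 - \<beta>) / \<beta> * ((s + h) powr \<beta> - h powr \<beta>))"
proof -
  define g where "g x t = ennreal (x powr (- \<beta>) * exp (- t * x) * indicator {h..h+s} t * indicator {0<..} x)"
    for x t :: real
  have "(\<integral>\<^sup>+x. ennreal (levy_density \<beta> h x * (1 - exp (- s * x)) * indicator {0<..} x) \<partial>lborel)
      = (\<integral>\<^sup>+x. \<integral>\<^sup>+t. g x t \<partial>lborel \<partial>lborel)"
  proof (rule nn_integral_cong)
    fix x :: real
    show "ennreal (levy_density \<beta> h x * (1 - exp (- s * x)) * indicator {0<..} x) = (\<integral>\<^sup>+t. g x t \<partial>lborel)"
      using levy_density_times_increment[OF _ s, of x \<beta> h] by (cases "x > 0") (simp_all add: g_def)
  qed
  also have "\<dots> = (\<integral>\<^sup>+t. \<integral>\<^sup>+x. g x t \<partial>lborel \<partial>lborel)"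
    by (rule lborel_pair.Fubini'[symmetric]) (simp add: g_def)
  also have "\<dots> = (\<integral>\<^sup>+t. ennreal (Gamma (1 - \<beta>)) * ennreal (t powr (\<beta> - 1) * indicator {h..h+s} t) \<partial>lborel)"
  proof (rule nn_integral_cong)
    fix t :: real
    show "(\<integral>\<^sup>+x. g x t \<partial>lborel) = ennreal (Gamma (1 - \<beta>)) * ennreal (t powr (\<beta> - 1) * indicator {h..h+s} t)"
    proof (cases "t \<in> {h..h+s}")
      case True
      then have t: "t > 0" using h by auto
      have "(\<integral>\<^sup>+x. g x t \<partial>lborel) = (\<integral>\<^sup>+x. ennreal (x powr ((1 - \<beta>) - 1) * exp (- t * x)) * indicator {0<..} x \<partial>lborel)"
        using True by (intro nn_integral_cong) (simp add: g_def indicator_def)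
      also have "\<dots> = ennreal (Gamma (1 - \<beta>) / t powr (1 - \<beta>))"
        by (rule gamma_scaled) (use b t in auto)
      also have "Gamma (1 - \<beta>) / t powr (1 - \<beta>) = Gamma (1 - \<beta>) * t powr (\<beta> - 1)"
        using t by (simp add: powr_diff powr_minus_divide)
      finally show ?thesis
        using True t Gamma_real_pos[of "1 - \<beta>"] b by (simp add: ennreal_mult[symmetric])
    qed (simp add: g_def)
  qed
  also have "\<dots> = ennreal (Gamma (1 - \<beta>)) * ennreal (((s + h) powr \<beta> - h powr \<beta>) / \<beta>)"
    using b h s by (simp add: nn_integral_cmult nn_integral_powr_interval add.commute)
  also have "\<dots> = ennreal (Gamma (1 - \<beta>) / \<beta> * ((s + h) powr \<beta> - h powr \<beta>))"
  proof -
    have "h powr \<beta> \<le> (s + h) powr \<beta>" using b h s by (intro powr_mono2) auto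
    then show ?thesis using b Gamma_real_pos[of "1 - \<beta>"] by (simp add: ennreal_mult[symmetric])
  qed
  finally show ?thesis .
qed

definition cutoff :: "nat \<Rightarrow> real set" where
  "cutoff n = {1 / real (Suc n)..real (Suc n)}"

lemma cutoff_pos: "x \<in> cutoff n \<Longrightarrow> 0 < x"
  unfolding cutoff_def by (rule less_le_trans[of _ "1 / real (Suc n)"]) auto

lemma cutoff_eventually:
  assumes x: "0 < x"
  shows "eventually (\<lambda>n. x \<in> cutoff n) sequentially"
proof -
  obtain N :: nat where N: "max x (1 / x) < N" using reals_Archimedean2 by blast
  have "x \<in> cutoff n" if "n \<ge> N" for n
  proof -
    have "x * real N \<le> x * real (Suc n)" using that x by (intro mult_left_mono) auto
    then show ?thesis using N that x by (auto simp: cutoff_def field_simps)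
  qed
  then show ?thesis unfolding eventually_sequentially by blast
qed

lemma levy_exponent_truncated_limit:
  fixes \<beta> h s :: real
  assumes b: "0 < \<beta>" "\<beta> < 1" and h: "h > 0" and s: "s \<ge> 0"
  shows "(\<lambda>n. \<integral>x. levy_density \<beta> h x * (1 - exp (- s * x)) * indicator (cutoff n) x \<partial>lborel)
         \<longlonglongrightarrow> Gamma (1 - \<beta>) / \<beta> * ((s + h) powr \<beta> - h powr \<beta>)"
proof -
  define C where "C = Gamma (1 - \<beta>) / \<beta> * ((s + h) powr \<beta> - h powr \<beta>)"
  define g where "g x = levy_density \<beta> h x * (1 - exp (- s * x)) * indicator {0<..} x" for x
  have g_measurable[measurable]: "g \<in> borel_measurable borel"
    unfolding g_def by measurable
  have g_nonneg: "0 \<le> g x" for x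
    using s levy_density_nonneg[of \<beta> h x] by (auto simp: g_def indicator_def)
  have C: "C \<ge> 0"
    using b h s Gamma_real_pos[of "1 - \<beta>"] powr_mono2[of \<beta> h "s + h"] by (simp add: C_def)
  have g_nn_integral: "(\<integral>\<^sup>+x. ennreal (g x) \<partial>lborel) = ennreal C"
    unfolding g_def C_def by (rule levy_exponent_nn[OF b h s])
  have g_integrable: "integrable lborel g"
    using g_nonneg g_nn_integral by (intro integrableI_nonneg) auto
  have "(\<integral>x. g x \<partial>lborel) = C"
    using g_nonneg g_nn_integral C by (subst integral_eq_nn_integral) auto
  moreover have "(\<lambda>n. \<integral>x. g x * indicator (cutoff n) x \<partial>lborel) \<longlonglongrightarrow> (\<integral>x. g x \<partial>lborel)"
  proof (rule integral_dominated_convergence[where w=g])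
    show "AE x in lborel. (\<lambda>n. g x * indicator (cutoff n) x) \<longlonglongrightarrow> g x"
    proof (intro AE_I2)
      fix x :: real
      show "(\<lambda>n. g x * indicator (cutoff n) x) \<longlonglongrightarrow> g x"
      proof (cases "x > 0")
        case True
        then have "eventually (\<lambda>n. g x * indicator (cutoff n) x = g x) sequentially"
          by (rule eventually_mono[OF cutoff_eventually]) simp
        then show ?thesis by (rule tendsto_eventually)
      qed (simp add: g_def)
    qed
    show "AE x in lborel. norm (g x * indicator (cutoff n) x) \<le> g x" for n
      using g_nonneg by (intro AE_I2) (simp add: indicator_def)
  qed (use g_integrable in \<open>simp_all add: cutoff_def\<close>)
  moreover have "g x * indicator (cutoff n) x
      = levy_density \<beta> h x * (1 - exp (- s * x)) * indicator (cutoff n) x" for x n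
    using cutoff_pos[of x n] by (auto simp: g_def indicator_def)
  ultimately show ?thesis by (simp add: C_def)
qed

text \<open>Tempered stable laws exist: for 0 < \<beta> < 1, h > 0, A \<ge> 0 the function
  exp(-A((s+h)^\<beta> - h^\<beta>)) is a Laplace transform, obtained from the suitably scaled Levy
  density truncated to the windows.\<close>
lemma lt_tempered_stable:
  fixes \<beta> h A :: real
  assumes b: "0 < \<beta>" "\<beta> < 1" and h: "h > 0" and A: "A \<ge> 0"
  shows "is_laplace_transform_prob (\<lambda>s. exp (- A * ((s + h) powr \<beta> - h powr \<beta>)))"
proof -
  have Gamma_pos: "Gamma (1 - \<beta>) > 0" using b by (intro Gamma_real_pos) simp
  define a where "a = A * \<beta> / Gamma (1 - \<beta>)"
  have a: "a \<ge> 0" using A b Gamma_pos by (simp add: a_def)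
  have A_eq: "a * (Gamma (1 - \<beta>) / \<beta>) = A"
    using b less_imp_neq[OF Gamma_pos] by (simp add: a_def)
  define F where "F n x = levy_density \<beta> h x * a * indicator (cutoff n) x" for n x
  have exponent: "(\<lambda>n. \<integral>x. F n x * (1 - exp (- s * x)) \<partial>lborel) \<longlonglongrightarrow> A * ((s + h) powr \<beta> - h powr \<beta>)"
    if s: "s \<ge> 0" for s
  proof -
    have "(\<integral>x. F n x * (1 - exp (- s * x)) \<partial>lborel)
        = a * (\<integral>x. levy_density \<beta> h x * (1 - exp (- s * x)) * indicator (cutoff n) x \<partial>lborel)" for n
    proof -
      have "(\<integral>x. F n x * (1 - exp (- s * x)) \<partial>lborel)
          = (\<integral>x. a * (levy_density \<beta> h x * (1 - exp (- s * x)) * indicator (cutoff n) x) \<partial>lborel)"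
        unfolding F_def by (rule Bochner_Integration.integral_cong) (simp_all add: algebra_simps)
      then show ?thesis by simp
    qed
    moreover have "(\<lambda>n. a * (\<integral>x. levy_density \<beta> h x * (1 - exp (- s * x)) * indicator (cutoff n) x \<partial>lborel))
        \<longlonglongrightarrow> a * (Gamma (1 - \<beta>) / \<beta> * ((s + h) powr \<beta> - h powr \<beta>))"
      by (intro tendsto_mult_left levy_exponent_truncated_limit[OF b h s])
    ultimately show ?thesis by (simp add: A_eq[symmetric] mult.assoc)
  qed
  have "is_laplace_transform_prob (\<lambda>s. exp (- (A * ((s + h) powr \<beta> - h powr \<beta>))))"
  proof (rule lt_exp_of_levy_limit[OF _ _ _ _ exponent])
    show "F n \<in> borel_measurable borel" for n unfolding F_def cutoff_def by measurable
    show "0 \<le> F n x" for n x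
      using a levy_density_nonneg[of \<beta> h x] by (simp add: F_def)
    show "F n x = 0" if "x < 0" for n x
      using cutoff_pos[of x n] that by (auto simp: F_def indicator_def)
    show "integrable lborel (F n)" for n
      unfolding F_def cutoff_def by (rule levy_density_integrable_on_interval) auto
    have "isCont (\<lambda>s. A * ((s + h) powr \<beta> - h powr \<beta>)) 0"
      using h by (intro continuous_intros) auto
    then show "((\<lambda>s. A * ((s + h) powr \<beta> - h powr \<beta>)) \<longlongrightarrow> 0) (at_right 0)"
      by (simp add: isCont_def tendsto_mono[OF at_within_le_at])
  qed
  then show ?thesis by simp
qed

lemma casual_g_binomial_expansion:
  fixes m n :: nat and h s :: real
  assumes m: "m \<ge> 1" and n: "n \<ge> 1" and h: "h > 0" and s: "s \<ge> 0"
  defines "A \<equiv> \<lambda>k. real (m choose k) * (1 / real n) ^ k * ((real n - 1) / real n * h powr (1 / real m)) ^ (m - k)"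
  shows "casual_g (1 / real m) h n s =
     (\<Prod>k\<le>m. exp (- A k * ((s + h) powr (real k / real m) - h powr (real k / real m))))"
proof -
  define u where "u = (s + h) powr (1 / real m)"
  define h0 where "h0 = h powr (1 / real m)"
  define a where "a = 1 / real n"
  define b where "b = (real n - 1) / real n * h0"
  have u: "u > 0" unfolding u_def using h s by simp
  have h0: "h0 > 0" unfolding h0_def using h by simp
  have X: "a * u + b > 0" using n h0 u unfolding a_def b_def by (simp add: add_pos_nonneg)
  have A: "A k = real (m choose k) * a ^ k * b ^ (m - k)" for k
    unfolding A_def a_def b_def h0_def by simp
  have u_power: "u ^ k = (s + h) powr (real k / real m)" for k
    using u unfolding u_def by (simp add: powr_realpow[symmetric] powr_powr)
  have h0_power: "h0 ^ k = h powr (real k / real m)" for k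
    using h0 unfolding h0_def by (simp add: powr_realpow[symmetric] powr_powr)
  have "h = (a * h0 + b) ^ m"
    using h0_power[of m] m h n by (simp add: a_def b_def field_simps)
  moreover have "casual_g (1 / real m) h n s = exp (h - (a * u + b) ^ m)"
    using X m by (simp add: casual_g_def u_def a_def b_def h0_def powr_realpow)
  ultimately have "casual_g (1 / real m) h n s = exp ((a * h0 + b) ^ m - (a * u + b) ^ m)"
    by simp
  also have "(a * h0 + b) ^ m - (a * u + b) ^ m =
      (\<Sum>k\<le>m. - A k * ((s + h) powr (real k / real m) - h powr (real k / real m)))"
    unfolding binomial_ring A u_power[symmetric] h0_power[symmetric]
    by (simp add: sum_subtractf[symmetric] power_mult_distrib algebra_simps)
  finally show ?thesis by (simp add: exp_sum)
qed

lemma casual_g_laplace_transform: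
  fixes m n :: nat and h :: real
  assumes m: "m \<ge> 2" and n: "n \<ge> 1" and h: "h > 0"
  shows "is_laplace_transform_prob (casual_g (1 / real m) h n)"
proof -
  define A where "A k = real (m choose k) * (1 / real n) ^ k * ((real n - 1) / real n * h powr (1 / real m)) ^ (m - k)"
    for k
  have A: "A k \<ge> 0" for k unfolding A_def using n by simp
  have "is_laplace_transform_prob (\<lambda>s. exp (- A k * ((s + h) powr (real k / real m) - h powr (real k / real m))))"
    if "k \<le> m" for k
  proof -
    consider "k = 0" | "k = m" | "0 < k" "k < m" using \<open>k \<le> m\<close> by linarith
    then show ?thesis
    proof cases
      case 1
      then show ?thesis using h by (intro lt_cong[OF lt_one]) simp
    next
      case 2
      then show ?thesis using m h by (intro lt_cong[OF lt_dirac[OF A[of k]]]) (simp add: algebra_simps)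
    next
      case 3
      then show ?thesis using h A by (intro lt_tempered_stable) auto
    qed
  qed
  then have "is_laplace_transform_prob
      (\<lambda>s. \<Prod>k\<le>m. exp (- A k * ((s + h) powr (real k / real m) - h powr (real k / real m))))"
    by (intro lt_prod) auto
  then show ?thesis
    by (rule lt_cong) (use casual_g_binomial_expansion[OF _ n h] m in \<open>simp add: A_def\<close>)
qed

lemma casual_g_functional_equation:
  fixes \<alpha> c h s :: real and n :: nat
  assumes \<alpha>: "\<alpha> > 0" and n: "n \<ge> 1" and h: "h > 0" and s: "s \<ge> 0"
  shows "tps_L \<alpha> c h s = (tps_L \<alpha> c h (- ln (casual_g \<alpha> h n s))) ^ n"
proof -
  define X where "X = (1 / real n) * (s + h) powr \<alpha> + ((real n - 1) / real n) * h powr \<alpha>"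
  have X: "X > 0" unfolding X_def using n s h by (intro add_pos_nonneg) auto
  have "- ln (casual_g \<alpha> h n s) + h = X powr (1 / \<alpha>)"
    unfolding casual_g_def X_def by simp
  then have "(- ln (casual_g \<alpha> h n s) + h) powr \<alpha> = X"
    using X \<alpha> by (simp add: powr_powr)
  then have "(tps_L \<alpha> c h (- ln (casual_g \<alpha> h n s))) ^ n = exp (real n * (- c * (X - h powr \<alpha>)))"
    by (simp add: tps_L_def exp_of_nat_mult[symmetric])
  also have "real n * (- c * (X - h powr \<alpha>)) = - c * ((s + h) powr \<alpha> - h powr \<alpha>)"
    unfolding X_def using n by (simp add: field_simps)
  finally show ?thesis by (simp add: tps_L_def)
qed

theorem mainTheorem3:
  fixes m :: nat and h c :: real
  assumes "m \<ge> 2" and "h > 0" and "c > 0"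
  shows "(\<forall>n::nat. n \<ge> 1 \<longrightarrow>
            is_laplace_transform_prob (casual_g (1 / real m) h n) \<and>
            (\<forall>s\<ge>0. tps_L (1 / real m) c h s =
                     (tps_L (1 / real m) c h (- ln (casual_g (1 / real m) h n s))) ^ n))
         \<and> casual_stable (tps_L (1 / real m) c h)"
proof -
  have "is_laplace_transform_prob (casual_g (1 / real m) h n) \<and>
        (\<forall>s\<ge>0. tps_L (1 / real m) c h s = (tps_L (1 / real m) c h (- ln (casual_g (1 / real m) h n s))) ^ n)"
    if "n \<ge> 1" for n
    using casual_g_laplace_transform[OF assms(1) that assms(2)]
      casual_g_functional_equation[of "1 / real m" n h] assms that by simp
  then show ?thesis unfolding casual_stable_def by blast
qed

end
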